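(* In the network model of the context, suppose $P<\infty$ and $N_0>0$. The capacity of cooperation-free admissible protocols, i.e. protocols in which nodes $1,\dots,K$ never transmit and only the source transmits, is $0$. This holds for both unicasting and multicasting.
   Context: Network model. For each $K\ge1$ there is a source node $0$ and receiving nodes $1,\dots,K$. The channel gains $h_{jk}$ between distinct nodes are i.i.d. $\mathcal{CN}(0,1)$ and fixed during the $n$ channel uses. A receiving node $k$ observes $y_k(i)=\sum_{j\in\mathcal{T}(i)}h_{jk}x_j(i)+z_k(i)$, where $\mathcal{T}(i)$ is the set of transmitting nodes at time $i$ and the noises $z_k(i)$ are i.i.d. $\mathcal{CN}(0,N_0)$, independent of everything else. Admissible protocol. Nodes are half-duplex and relays, once they start transmitting, never return to receive mode. The source's symbols are functions of the message $W\in\{1,\dots,M\}$. A relay's transmitted symbols and each node's final decision $\hat W_k$ are functions of that node's observations and of its incoming gains $\{h_{jk}\}_j$. The expected sum power satisfies $E[\frac1n\sum_i\sum_{k\in\mathcal{T}(i)}|X_k(i)|^2]\le P$. Unicasting and multicasting. Unicasting has a single destination node; multicasting requires all nodes $1,\dots,K$ to decode. Capacity. A rate $R$ is achievable if for every $K$ there is an admissible protocol (here, a cooperation-free one) with $n_K$ channel uses and $2^{n_KR}$ messages whose probability of decoding failure at the destination(s) tends to $0$ as $K\to\infty$. The capacity is the supremum of the achievable rates. *)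

theory Defs
  imports "HOL-Probability.Probability"
begin

text \<open>Circularly-symmetric complex Gaussian law CN(0, s2) on the complex plane
  (density w.r.t. Lebesgue measure on C = R^2).\<close>
definition cgauss :: "real \<Rightarrow> complex measure" where
  "cgauss s2 = density lborel (\<lambda>z. ennreal (exp (- (cmod z)\<^sup>2 / s2) / (pi * s2)))"

text \<open>Channel gains h_jk from node j to receiving node k (j in 0..K, k in 1..K, j ~= k).\<close>
definition gain_idx :: "nat \<Rightarrow> (nat \<times> nat) set" where
  "gain_idx K = {(j, k). j \<le> K \<and> 1 \<le> k \<and> k \<le> K \<and> j \<noteq> k}"

text \<open>Noise samples z_k(i) at receiving node k and time i < n.\<close>
definition noise_idx :: "nat \<Rightarrow> nat \<Rightarrow> (nat \<times> nat) set" where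
  "noise_idx K n = {1..K} \<times> {..<n}"

definition chan_space :: "real \<Rightarrow> nat \<Rightarrow> nat \<Rightarrow>
    ((nat \<times> nat \<Rightarrow> complex) \<times> (nat \<times> nat \<Rightarrow> complex)) measure" where
  "chan_space N0 K n =
     (PiM (gain_idx K) (\<lambda>_. cgauss 1)) \<Otimes>\<^sub>M (PiM (noise_idx K n) (\<lambda>_. cgauss N0))"

definition num_msgs :: "nat \<Rightarrow> real \<Rightarrow> nat" where
  "num_msgs n R = nat \<lceil>2 powr (real n * R)\<rceil>"

text \<open>Observations of node k in a cooperation-free protocol (only the source 0 transmits,
  with symbol x w i at time i when the message is w): y_k(i) = h_0k x_0(i) + z_k(i), i < n.\<close>
definition observation ::
    "(nat \<Rightarrow> nat \<Rightarrow> complex) \<Rightarrow> nat \<Rightarrow> nat \<Rightarrow> nat \<Rightarrow>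
     (nat \<times> nat \<Rightarrow> complex) \<times> (nat \<times> nat \<Rightarrow> complex) \<Rightarrow> nat \<Rightarrow> complex" where
  "observation x w k n \<omega> = restrict (\<lambda>i. fst \<omega> (0, k) * x w i + snd \<omega> (k, i)) {..<n}"

definition incoming ::
    "nat \<Rightarrow> nat \<Rightarrow> (nat \<times> nat \<Rightarrow> complex) \<times> (nat \<times> nat \<Rightarrow> complex) \<Rightarrow> nat \<Rightarrow> complex" where
  "incoming K k \<omega> = restrict (\<lambda>j. fst \<omega> (j, k)) ({0..K} - {k})"

text \<open>Probability (message W uniform on {1..M}) that some destination in D decodes wrongly.
  dec k is the decision function of node k, applied to its observations and incoming gains.\<close>
definition fail_prob ::
    "real \<Rightarrow> nat \<Rightarrow> nat \<Rightarrow> nat \<Rightarrow> (nat \<Rightarrow> nat \<Rightarrow> complex) \<Rightarrow>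
     (nat \<Rightarrow> (nat \<Rightarrow> complex) \<times> (nat \<Rightarrow> complex) \<Rightarrow> nat) \<Rightarrow> nat set \<Rightarrow> real" where
  "fail_prob N0 K n M x dec D =
     (\<Sum>w\<in>{1..M}. measure (chan_space N0 K n)
        {\<omega> \<in> space (chan_space N0 K n).
           \<exists>k\<in>D. dec k (observation x w k n \<omega>, incoming K k \<omega>) \<noteq> w}) / real M"

definition cf_admissible ::
    "real \<Rightarrow> nat set \<Rightarrow> nat \<Rightarrow> nat \<Rightarrow> nat \<Rightarrow> (nat \<Rightarrow> nat \<Rightarrow> complex) \<Rightarrow>
     (nat \<Rightarrow> (nat \<Rightarrow> complex) \<times> (nat \<Rightarrow> complex) \<Rightarrow> nat) \<Rightarrow> bool" where
  "cf_admissible P D K n M x dec \<longleftrightarrow>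
     1 \<le> n \<and>
     (\<Sum>w\<in>{1..M}. (1 / real n) * (\<Sum>i<n. (cmod (x w i))\<^sup>2)) / real M \<le> P \<and>
     (\<forall>k\<in>D. dec k \<in> measurable
        (PiM {..<n} (\<lambda>_. borel) \<Otimes>\<^sub>M PiM ({0..K} - {k}) (\<lambda>_. borel)) (count_space UNIV))"

definition cf_achievable :: "real \<Rightarrow> real \<Rightarrow> (nat \<Rightarrow> nat set) \<Rightarrow> real \<Rightarrow> bool" where
  "cf_achievable P N0 D R \<longleftrightarrow> 0 \<le> R \<and>
     (\<exists>(n :: nat \<Rightarrow> nat) (x :: nat \<Rightarrow> nat \<Rightarrow> nat \<Rightarrow> complex)
        (dec :: nat \<Rightarrow> nat \<Rightarrow> (nat \<Rightarrow> complex) \<times> (nat \<Rightarrow> complex) \<Rightarrow> nat).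
        (\<forall>K\<ge>1. cf_admissible P (D K) K (n K) (num_msgs (n K) R) (x K) (dec K)) \<and>
        (\<lambda>K. fail_prob N0 K (n K) (num_msgs (n K) R) (x K) (dec K) (D K)) \<longlonglongrightarrow> 0)"

definition cf_capacity :: "real \<Rightarrow> real \<Rightarrow> (nat \<Rightarrow> nat set) \<Rightarrow> ereal" where
  "cf_capacity P N0 D = Sup (ereal ` {R. cf_achievable P N0 D R})"

end

theory Submission
  imports Defs
begin

text \<open>Without cooperation, destination k observes only y = h x_w + z, where h = h_0k is its own
  gain and z its own noise.  With a probability q > 0 that depends on neither K nor n, |h| lies
  below a fixed radius r (a deep fade).  In that event a change of measure from CN(h x_w, N0) to
  CN(0, N0) followed by Cauchy-Schwarz gives
  P(decode w)^2 \<le> P(z \<in> D_w) exp(2 |h|^2 |x_w|^2 / N0).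
  The decision regions D_w are disjoint and, by the power constraint, all but a small fraction of
  the codewords have energy O(nP); hence on average over the 2^(nR) messages node k succeeds with
  probability at most (1 + 2^(-R/4))/2.  The error probability therefore stays above
  q (1 - 2^(-R/4))/2 for every K, so no positive rate is achievable.\<close>

section \<open>The circularly-symmetric complex Gaussian\<close>

definition cgauss_pdf :: "real \<Rightarrow> complex \<Rightarrow> real" where
  "cgauss_pdf s z = exp (- (cmod z)\<^sup>2 / s) / (pi * s)"

lemma cgauss_eq_density: "cgauss s = density lborel (\<lambda>z. ennreal (cgauss_pdf s z))"
  unfolding cgauss_def cgauss_pdf_def ..

lemma cgauss_pdf_measurable [measurable]: "cgauss_pdf s \<in> borel_measurable borel"
  unfolding cgauss_pdf_def by measurable

lemma cgauss_pdf_nonneg: "0 < s \<Longrightarrow> 0 \<le> cgauss_pdf s z"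
  unfolding cgauss_pdf_def by simp

lemma sets_cgauss [measurable_cong, simp]: "sets (cgauss s) = sets borel"
  unfolding cgauss_def by simp

lemma space_cgauss [simp]: "space (cgauss s) = UNIV"
  unfolding cgauss_def by simp

lemma cgauss_pdf_eq_normal_density:
  assumes "0 < s"
  shows "cgauss_pdf s z = normal_density 0 (sqrt (s / 2)) (Re z) * normal_density 0 (sqrt (s / 2)) (Im z)"
proof -
  have "normal_density 0 (sqrt (s / 2)) (Re z) * normal_density 0 (sqrt (s / 2)) (Im z)
      = (1 / sqrt (pi * s))\<^sup>2 * (exp (- (Re z)\<^sup>2 / s) * exp (- (Im z)\<^sup>2 / s))"
    using assms by (simp add: normal_density_def power2_eq_square real_sqrt_mult)
  also have "\<dots> = exp (- (Re z)\<^sup>2 / s + - (Im z)\<^sup>2 / s) / (pi * s)"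
    using assms by (simp add: power_divide exp_add[symmetric])
  finally show ?thesis
    by (simp add: cgauss_pdf_def cmod_power2 diff_divide_distrib)
qed

lemma nn_integral_cgauss_pdf:
  assumes "0 < s"
  shows "(\<integral>\<^sup>+z. ennreal (cgauss_pdf s z) \<partial>lborel) = 1"
proof -
  let ?g = "normal_density 0 (sqrt (s / 2))"
  have g: "(\<integral>\<^sup>+x. ennreal (?g x) \<partial>lborel) = 1"
    using prob_space.emeasure_space_1[OF prob_space_normal_density[of "sqrt (s / 2)" 0]] assms
    by (simp add: emeasure_density)
  have "(\<integral>\<^sup>+z. ennreal (cgauss_pdf s z) \<partial>lborel)
      = (\<integral>\<^sup>+z. (\<Prod>b\<in>(Basis :: complex set). ennreal (?g (z \<bullet> b))) \<partial>lborel)"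
    using assms
    by (intro nn_integral_cong) (simp add: cgauss_pdf_eq_normal_density Basis_complex_def ennreal_mult')
  also have "\<dots> = (\<Prod>b\<in>(Basis :: complex set). \<integral>\<^sup>+x. ennreal (?g x) \<partial>lborel)"
    by (rule nn_integral_lborel_prod) measurable
  finally show ?thesis
    using g by simp
qed

lemma prob_space_cgauss: "0 < s \<Longrightarrow> prob_space (cgauss s)"
  unfolding cgauss_eq_density
  by (rule prob_spaceI) (simp add: emeasure_density nn_integral_cgauss_pdf)

lemma measure_cgauss_ball_pos:
  assumes s: "0 < s" and r: "0 < r"
  shows "0 < measure (cgauss s) (ball 0 r)"
proof -
  interpret prob_space "cgauss s"
    using s by (rule prob_space_cgauss)
  define m where "m = exp (- r\<^sup>2 / s) / (pi * s)"
  have pdf_ge: "ennreal m * indicator (ball 0 r) z \<le> ennreal (cgauss_pdf s z) * indicator (ball 0 r) z"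
    for z
  proof (cases "z \<in> ball 0 r")
    case True
    then have "(cmod z)\<^sup>2 \<le> r\<^sup>2"
      by (intro power_mono) auto
    then have "m \<le> cgauss_pdf s z"
      using s unfolding m_def cgauss_pdf_def by (intro divide_right_mono) (auto simp: field_simps)
    then show ?thesis
      using True by (simp add: ennreal_leI)
  qed simp
  have m: "0 \<le> m"
    using s by (simp add: m_def)
  have "emeasure lborel (ball (0::complex) r) = ennreal (measure lborel (ball (0::complex) r))"
    using emeasure_lborel_ball_finite[of "0::complex" r] by (intro emeasure_eq_ennreal_measure) simp
  then have "ennreal (m * measure lborel (ball (0::complex) r))
      = (\<integral>\<^sup>+z. ennreal m * indicator (ball (0::complex) r) z \<partial>lborel)"
    using m by (simp add: nn_integral_cmult_indicator ennreal_mult)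
  also have "\<dots> \<le> (\<integral>\<^sup>+z. ennreal (cgauss_pdf s z) * indicator (ball 0 r) z \<partial>lborel)"
    by (intro nn_integral_mono pdf_ge)
  also have "\<dots> = emeasure (cgauss s) (ball 0 r)"
    by (simp add: cgauss_eq_density emeasure_density)
  also have "\<dots> = ennreal (measure (cgauss s) (ball 0 r))"
    by (rule emeasure_eq_measure)
  finally have "m * measure lborel (ball (0::complex) r) \<le> measure (cgauss s) (ball 0 r)"
    by (simp add: ennreal_le_iff)
  moreover have "0 < m * measure lborel (ball (0::complex) r)"
    using s r content_ball_pos[OF r] unfolding m_def by simp
  ultimately show ?thesis
    by linarith
qed

section \<open>Translated Gaussian noise\<close>

lemma nn_integral_lborel_translate:
  fixes f :: "'a::euclidean_space \<Rightarrow> ennreal"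
  assumes [measurable]: "f \<in> borel_measurable borel"
  shows "(\<integral>\<^sup>+y. f (c + y) \<partial>lborel) = (\<integral>\<^sup>+y. f y \<partial>lborel)"
proof -
  have "(\<integral>\<^sup>+y. f y \<partial>lborel) = (\<integral>\<^sup>+y. f y \<partial>distr lborel borel ((+) c))"
    by (simp add: lborel_distr_plus)
  also have "\<dots> = (\<integral>\<^sup>+y. f (c + y) \<partial>lborel)"
    by (subst nn_integral_distr) auto
  finally show ?thesis ..
qed

text \<open>The density of CN(c, s) with respect to CN(0, s).\<close>
definition cgauss_lr :: "real \<Rightarrow> complex \<Rightarrow> complex \<Rightarrow> real" where
  "cgauss_lr s c y = exp ((2 * Re (y * cnj c) - (cmod c)\<^sup>2) / s)"

lemma cgauss_lr_measurable [measurable]: "cgauss_lr s c \<in> borel_measurable borel"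
  unfolding cgauss_lr_def by measurable

lemma cgauss_pdf_translate:
  assumes "0 < s"
  shows "cgauss_pdf s (y - c) = cgauss_pdf s y * cgauss_lr s c y"
proof -
  have "(cmod (y - c))\<^sup>2 = (cmod y)\<^sup>2 - (2 * Re (y * cnj c) - (cmod c)\<^sup>2)"
    unfolding cmod_power2 by (simp add: power2_eq_square algebra_simps)
  then have "- (cmod (y - c))\<^sup>2 / s = - (cmod y)\<^sup>2 / s + (2 * Re (y * cnj c) - (cmod c)\<^sup>2) / s"
    by (simp add: diff_divide_distrib)
  then have "exp (- (cmod (y - c))\<^sup>2 / s)
      = exp (- (cmod y)\<^sup>2 / s) * exp ((2 * Re (y * cnj c) - (cmod c)\<^sup>2) / s)"
    by (simp only: exp_add)
  then show ?thesis
    unfolding cgauss_pdf_def cgauss_lr_def by simp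
qed

lemma cgauss_pdf_mult_lr_square:
  assumes "0 < s"
  shows "cgauss_pdf s y * (cgauss_lr s c y)\<^sup>2 = exp (2 * (cmod c)\<^sup>2 / s) * cgauss_pdf s (y - 2 * c)"
proof -
  have sq: "(cmod (y - 2 * c))\<^sup>2 = (cmod y)\<^sup>2 - 4 * Re (y * cnj c) + 4 * (cmod c)\<^sup>2"
    unfolding cmod_power2 by (simp add: power2_eq_square algebra_simps)
  have "- (cmod y)\<^sup>2 / s + 2 * ((2 * Re (y * cnj c) - (cmod c)\<^sup>2) / s)
      = 2 * (cmod c)\<^sup>2 / s + - (cmod (y - 2 * c))\<^sup>2 / s"
    unfolding sq using assms by (simp add: field_simps)
  then show ?thesis
    unfolding cgauss_pdf_def cgauss_lr_def power2_eq_square[of "exp _"]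
    by (simp add: exp_add[symmetric])
qed

lemma emeasure_cgauss_translate:
  assumes s: "0 < s" and [measurable]: "A \<in> sets borel"
  shows "emeasure (cgauss s) {y. c + y \<in> A}
    = emeasure (density (cgauss s) (\<lambda>y. ennreal (cgauss_lr s c y))) A"
proof -
  have "emeasure (cgauss s) {y. c + y \<in> A}
      = (\<integral>\<^sup>+y. (\<lambda>u. ennreal (cgauss_pdf s (u - c)) * indicator A u) (c + y) \<partial>lborel)"
    unfolding cgauss_eq_density by (subst emeasure_density) (auto intro!: nn_integral_cong split: split_indicator)
  also have "\<dots> = (\<integral>\<^sup>+u. ennreal (cgauss_pdf s (u - c)) * indicator A u \<partial>lborel)"
    by (rule nn_integral_lborel_translate) measurable
  also have "\<dots> = (\<integral>\<^sup>+u. ennreal (cgauss_pdf s u) * (ennreal (cgauss_lr s c u) * indicator A u) \<partial>lborel)"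
    using s by (intro nn_integral_cong)
      (simp add: cgauss_pdf_translate ennreal_mult' cgauss_pdf_nonneg mult.assoc)
  also have "\<dots> = emeasure (density (cgauss s) (\<lambda>y. ennreal (cgauss_lr s c y))) A"
    unfolding cgauss_eq_density by (simp add: emeasure_density nn_integral_density)
  finally show ?thesis .
qed

lemma prob_space_density_cgauss_lr:
  assumes "0 < s"
  shows "prob_space (density (cgauss s) (\<lambda>y. ennreal (cgauss_lr s c y)))"
proof (rule prob_spaceI)
  interpret prob_space "cgauss s"
    using assms by (rule prob_space_cgauss)
  show "emeasure (density (cgauss s) (\<lambda>y. ennreal (cgauss_lr s c y)))
      (space (density (cgauss s) (\<lambda>y. ennreal (cgauss_lr s c y)))) = 1"
    using emeasure_cgauss_translate[OF assms, of UNIV c] emeasure_space_1 by simp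
qed

lemma nn_integral_cgauss_lr_square:
  assumes s: "0 < s"
  shows "(\<integral>\<^sup>+y. (ennreal (cgauss_lr s c y))\<^sup>2 \<partial>cgauss s) = ennreal (exp (2 * (cmod c)\<^sup>2 / s))"
proof -
  have pointwise: "ennreal (cgauss_pdf s y) * (ennreal (cgauss_lr s c y))\<^sup>2
      = ennreal (exp (2 * (cmod c)\<^sup>2 / s)) * ennreal (cgauss_pdf s (- (2 * c) + y))" for y
  proof -
    have "ennreal (cgauss_pdf s y) * (ennreal (cgauss_lr s c y))\<^sup>2
        = ennreal (cgauss_pdf s y * (cgauss_lr s c y)\<^sup>2)"
      using s by (simp add: ennreal_mult'' ennreal_power cgauss_pdf_nonneg cgauss_lr_def)
    then show ?thesis
      using s by (simp add: cgauss_pdf_mult_lr_square ennreal_mult cgauss_pdf_nonneg)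
  qed
  have "(\<integral>\<^sup>+y. (ennreal (cgauss_lr s c y))\<^sup>2 \<partial>cgauss s)
      = (\<integral>\<^sup>+y. ennreal (exp (2 * (cmod c)\<^sup>2 / s)) * ennreal (cgauss_pdf s (- (2 * c) + y)) \<partial>lborel)"
    unfolding cgauss_eq_density by (simp add: nn_integral_density pointwise)
  also have "\<dots> = ennreal (exp (2 * (cmod c)\<^sup>2 / s)) * (\<integral>\<^sup>+y. ennreal (cgauss_pdf s (- (2 * c) + y)) \<partial>lborel)"
    by (rule nn_integral_cmult) measurable
  also have "(\<integral>\<^sup>+y. ennreal (cgauss_pdf s (- (2 * c) + y)) \<partial>lborel) = 1"
    using nn_integral_lborel_translate[of "\<lambda>u. ennreal (cgauss_pdf s u)" "- (2 * c)"]
    by (simp add: nn_integral_cgauss_pdf[OF s])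
  finally show ?thesis
    by simp
qed

lemma density_PiM_prod:
  assumes I: "finite I" and "product_prob_space M"
    and densities: "product_prob_space (\<lambda>i. density (M i) (f i))"
    and [measurable]: "\<And>i. i \<in> I \<Longrightarrow> f i \<in> borel_measurable (M i)"
  shows "density (PiM I M) (\<lambda>y. \<Prod>i\<in>I. f i (y i)) = PiM I (\<lambda>i. density (M i) (f i))"
proof -
  interpret M: product_prob_space M by fact
  interpret Q: product_prob_space "\<lambda>i. density (M i) (f i)" by (fact densities)
  show ?thesis
  proof (rule Q.PiM_eqI[OF I])
    show "sets (density (PiM I M) (\<lambda>y. \<Prod>i\<in>I. f i (y i))) = sets (PiM I (\<lambda>i. density (M i) (f i)))"
      by (simp cong: sets_PiM_cong)
  next
    fix A assume A: "\<And>i. i \<in> I \<Longrightarrow> A i \<in> sets (density (M i) (f i))"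
    then have [measurable]: "\<And>i. i \<in> I \<Longrightarrow> A i \<in> sets (M i)"
      by simp
    have "indicator (PiE I A) y = (\<Prod>i\<in>I. indicator (A i) (y i) :: ennreal)"
      if "y \<in> space (PiM I M)" for y
      using that I by (auto simp: indicator_def PiE_iff space_PiM)
    then have "emeasure (density (PiM I M) (\<lambda>y. \<Prod>i\<in>I. f i (y i))) (PiE I A)
        = (\<integral>\<^sup>+y. (\<Prod>i\<in>I. f i (y i) * indicator (A i) (y i)) \<partial>PiM I M)"
      using I by (subst emeasure_density)
        (auto intro!: nn_integral_cong sets_PiM_I_finite simp: prod.distrib)
    also have "\<dots> = (\<Prod>i\<in>I. \<integral>\<^sup>+y. f i y * indicator (A i) y \<partial>M i)"
      by (rule M.product_nn_integral_prod[OF I]) measurable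
    also have "\<dots> = (\<Prod>i\<in>I. emeasure (density (M i) (f i)) (A i))"
      by (intro prod.cong refl) (simp add: emeasure_density)
    finally show "emeasure (density (PiM I M) (\<lambda>y. \<Prod>i\<in>I. f i (y i))) (PiE I A)
        = (\<Prod>i\<in>I. emeasure (density (M i) (f i)) (A i))" .
  qed
qed

lemma distr_PiM_cgauss_translate:
  assumes s: "0 < s" and I: "finite I"
  shows "distr (PiM I (\<lambda>_. cgauss s)) (PiM I (\<lambda>_. cgauss s)) (\<lambda>y. \<lambda>i\<in>I. a i + y i)
    = density (PiM I (\<lambda>_. cgauss s)) (\<lambda>y. \<Prod>i\<in>I. ennreal (cgauss_lr s (a i) (y i)))"
proof -
  let ?N = "PiM I (\<lambda>_. cgauss s)"
  let ?Q = "\<lambda>i. density (cgauss s) (\<lambda>y. ennreal (cgauss_lr s (a i) y))"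
  interpret N: product_prob_space "\<lambda>_. cgauss s"
    using s by (intro product_prob_spaceI prob_space_cgauss)
  interpret Q: product_prob_space ?Q
    using s by (intro product_prob_spaceI prob_space_density_cgauss_lr)
  have "distr ?N ?N (\<lambda>y. \<lambda>i\<in>I. a i + y i) = PiM I ?Q"
  proof (rule Q.PiM_eqI[OF I])
    show "sets (distr ?N ?N (\<lambda>y. \<lambda>i\<in>I. a i + y i)) = sets (PiM I ?Q)"
      by (simp cong: sets_PiM_cong)
  next
    fix A assume "\<And>i. i \<in> I \<Longrightarrow> A i \<in> sets (?Q i)"
    then have [measurable]: "\<And>i. i \<in> I \<Longrightarrow> A i \<in> sets borel"
      by simp
    have "(\<lambda>y. \<lambda>i\<in>I. a i + y i) -` PiE I A \<inter> space ?N = PiE I (\<lambda>i. {y. a i + y \<in> A i})"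
      by (auto simp: space_PiM PiE_iff)
    then have "emeasure (distr ?N ?N (\<lambda>y. \<lambda>i\<in>I. a i + y i)) (PiE I A)
        = emeasure ?N (PiE I (\<lambda>i. {y. a i + y \<in> A i}))"
      using I by (subst emeasure_distr) (auto intro!: sets_PiM_I_finite)
    also have "\<dots> = (\<Prod>i\<in>I. emeasure (?Q i) (A i))"
      using I s by (subst N.emeasure_PiM) (auto simp: emeasure_cgauss_translate)
    finally show "emeasure (distr ?N ?N (\<lambda>y. \<lambda>i\<in>I. a i + y i)) (PiE I A)
        = (\<Prod>i\<in>I. emeasure (?Q i) (A i))" .
  qed
  also have "\<dots> = density ?N (\<lambda>y. \<Prod>i\<in>I. ennreal (cgauss_lr s (a i) (y i)))"
    by (rule density_PiM_prod[symmetric, OF I N.product_prob_space_axioms Q.product_prob_space_axioms])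
      measurable
  finally show ?thesis .
qed

text \<open>Change of measure from the shifted to the unshifted noise, then Cauchy-Schwarz.\<close>
lemma measure_PiM_cgauss_translate_sq_le:
  assumes s: "0 < s" and I: "finite I" and D [measurable]: "D \<in> sets (PiM I (\<lambda>_. cgauss s))"
  shows "(measure (PiM I (\<lambda>_. cgauss s)) {y \<in> space (PiM I (\<lambda>_. cgauss s)). (\<lambda>i\<in>I. a i + y i) \<in> D})\<^sup>2
    \<le> measure (PiM I (\<lambda>_. cgauss s)) D * exp (2 * (\<Sum>i\<in>I. (cmod (a i))\<^sup>2) / s)"
proof -
  let ?N = "PiM I (\<lambda>_. cgauss s)"
  let ?F = "\<lambda>y. \<Prod>i\<in>I. ennreal (cgauss_lr s (a i) (y i))"
  interpret N: product_prob_space "\<lambda>_. cgauss s"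
    using s by (intro product_prob_spaceI prob_space_cgauss)
  have "emeasure ?N {y \<in> space ?N. (\<lambda>i\<in>I. a i + y i) \<in> D}
      = emeasure (distr ?N ?N (\<lambda>y. \<lambda>i\<in>I. a i + y i)) D"
    by (subst emeasure_distr) (auto intro!: arg_cong[where f = "emeasure ?N"])
  also have "\<dots> = (\<integral>\<^sup>+y. indicator D y * ?F y \<partial>?N)"
    by (simp add: distr_PiM_cgauss_translate[OF s I] emeasure_density mult.commute)
  finally have "(emeasure ?N {y \<in> space ?N. (\<lambda>i\<in>I. a i + y i) \<in> D})\<^sup>2
      = (\<integral>\<^sup>+y. indicator D y * ?F y \<partial>?N)\<^sup>2"
    by simp
  also have "\<dots> \<le> (\<integral>\<^sup>+y. (indicator D y)\<^sup>2 \<partial>?N) * (\<integral>\<^sup>+y. (?F y)\<^sup>2 \<partial>?N)"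
    by (rule Cauchy_Schwarz_nn_integral) measurable
  also have "(\<integral>\<^sup>+y. (indicator D y)\<^sup>2 \<partial>?N) = emeasure ?N D"
  proof -
    have "(\<lambda>y. (indicator D y :: ennreal)\<^sup>2) = indicator D"
      by (auto simp: indicator_def)
    then show ?thesis
      by simp
  qed
  also have "(\<integral>\<^sup>+y. (?F y)\<^sup>2 \<partial>?N) = (\<Prod>i\<in>I. \<integral>\<^sup>+y. (ennreal (cgauss_lr s (a i) y))\<^sup>2 \<partial>cgauss s)"
    unfolding prod_power_distrib by (rule N.product_nn_integral_prod[OF I]) measurable
  also have "\<dots> = ennreal (exp (2 * (\<Sum>i\<in>I. (cmod (a i))\<^sup>2) / s))"
    using I by (simp add: nn_integral_cgauss_lr_square[OF s] prod_ennreal exp_sum[symmetric]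
        sum_divide_distrib sum_distrib_left)
  finally have "ennreal ((measure ?N {y \<in> space ?N. (\<lambda>i\<in>I. a i + y i) \<in> D})\<^sup>2)
      \<le> ennreal (measure ?N D * exp (2 * (\<Sum>i\<in>I. (cmod (a i))\<^sup>2) / s))"
    by (simp add: N.P.emeasure_eq_measure ennreal_power ennreal_mult'' restrict_def)
  then show ?thesis
    by (simp add: ennreal_le_iff)
qed

section \<open>A single link in a deep fade\<close>

lemma sum_le_of_square_le:
  fixes p q :: "'a \<Rightarrow> real"
  assumes sq: "\<And>w. w \<in> G \<Longrightarrow> (p w)\<^sup>2 \<le> q w * E\<^sup>2"
    and q: "(\<Sum>w\<in>G. q w) \<le> 1" and E: "0 < E" and card: "real (card G) \<le> M" and M: "0 < M"
  shows "(\<Sum>w\<in>G. p w) \<le> E * sqrt M"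
proof -
  define \<tau> where "\<tau> = sqrt M / E"
  have \<tau>: "0 < \<tau>"
    using E M by (simp add: \<tau>_def)
  \<comment> \<open>AM-GM, with the weight \<tau> chosen to balance the two resulting sums\<close>
  have "p w \<le> (\<tau> * E\<^sup>2 * q w + 1 / \<tau>) / 2" if "w \<in> G" for w
  proof -
    have "2 * \<tau> * p w \<le> \<tau>\<^sup>2 * (p w)\<^sup>2 + 1"
      using sum_squares_bound[of "\<tau> * p w" 1] by (simp add: power_mult_distrib)
    also have "\<dots> \<le> \<tau>\<^sup>2 * (q w * E\<^sup>2) + 1"
      using sq[OF that] by (intro add_right_mono mult_left_mono) auto
    finally show ?thesis
      using \<tau> by (simp add: field_simps power2_eq_square)
  qed
  then have "(\<Sum>w\<in>G. p w) \<le> (\<Sum>w\<in>G. (\<tau> * E\<^sup>2 * q w + 1 / \<tau>) / 2)"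
    by (rule sum_mono)
  also have "\<dots> = (\<tau> * E\<^sup>2 * (\<Sum>w\<in>G. q w) + real (card G) / \<tau>) / 2"
    by (simp add: sum_divide_distrib[symmetric] sum.distrib sum_distrib_left)
  also have "\<dots> \<le> (\<tau> * E\<^sup>2 + M / \<tau>) / 2"
    using q card \<tau> by (intro divide_right_mono add_mono) (auto simp: mult_left_le divide_right_mono)
  also have "\<dots> = E * sqrt M"
    using E M by (simp add: \<tau>_def field_simps power2_eq_square)
  finally show ?thesis .
qed

lemma card_greater_le_sum_div:
  fixes e :: "'a \<Rightarrow> real"
  assumes W: "finite W" and e: "\<And>w. w \<in> W \<Longrightarrow> 0 \<le> e w" and t: "0 < t"
  shows "real (card {w \<in> W. t < e w}) \<le> (\<Sum>w\<in>W. e w) / t"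
proof -
  have "real (card {w \<in> W. t < e w}) * t = (\<Sum>w \<in> {w \<in> W. t < e w}. t)"
    by simp
  also have "\<dots> \<le> (\<Sum>w \<in> {w \<in> W. t < e w}. e w)"
    by (rule sum_mono) simp
  also have "\<dots> \<le> (\<Sum>w\<in>W. e w)"
    using W e by (intro sum_mono2) auto
  finally show ?thesis
    using t by (simp add: field_simps)
qed

lemma num_msgs_ge_1: "1 \<le> num_msgs n R"
proof -
  have "0 < 2 powr (real n * R)"
    by simp
  then show ?thesis
    unfolding num_msgs_def by linarith
qed

lemma two_powr_rate_le_sqrt_num_msgs:
  assumes R: "0 \<le> R" and n: "1 \<le> n"
  shows "2 powr (real n * R / 4) \<le> 2 powr (- R / 4) * sqrt (num_msgs n R)"
proof -
  have "2 powr (real n * R / 4) = 2 powr (- R / 4) * 2 powr ((real n + 1) * R / 4)"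
    by (simp add: powr_add[symmetric] field_simps)
  also have "\<dots> \<le> 2 powr (- R / 4) * 2 powr (real n * R / 2)"
    using mult_left_mono[of 1 "real n" R] R n by (intro mult_left_mono powr_mono) (auto simp: field_simps)
  also have "2 powr (real n * R / 2) = sqrt (2 powr (real n * R))"
    by (simp add: powr_half_sqrt[symmetric] powr_powr)
  also have "\<dots> \<le> sqrt (num_msgs n R)"
    unfolding num_msgs_def by (intro real_sqrt_le_mono) linarith
  finally show ?thesis
    by simp
qed

text \<open>Below this gain magnitude no decoder for rate R succeeds with average probability above
  (1 + 2^(-R/4))/2.\<close>
definition deep_fade_radius :: "real \<Rightarrow> real \<Rightarrow> real \<Rightarrow> real" where
  "deep_fade_radius P s R = sqrt (R * ln 2 * s * (1 - 2 powr (- R / 4)) / (8 * (P + 1)))"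

lemma deep_fade_radius_pos: "0 < s \<Longrightarrow> 0 \<le> P \<Longrightarrow> 0 < R \<Longrightarrow> 0 < deep_fade_radius P s R"
  unfolding deep_fade_radius_def by (simp add: powr_less_one)

lemma deep_fade_radius_square:
  "0 < s \<Longrightarrow> 0 \<le> P \<Longrightarrow> 0 < R \<Longrightarrow>
    (deep_fade_radius P s R)\<^sup>2 = R * ln 2 * s * (1 - 2 powr (- R / 4)) / (8 * (P + 1))"
  unfolding deep_fade_radius_def
  by (intro real_sqrt_pow2 divide_nonneg_nonneg mult_nonneg_nonneg) (auto simp: powr_less_one less_imp_le)

text \<open>Codewords of energy above the threshold T are few by Markov's inequality.  For the others
  the change of measure bound gives p_w^2 \<le> q_w 2^(nR/2), where the decoding probabilities q_w
  under pure noise sum to at most 1; AM-GM over the 2^(nR) messages then leaves a factor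
  2^(-R/4).\<close>
lemma sum_decoding_prob_deep_fade_le:
  fixes x :: "nat \<Rightarrow> nat \<Rightarrow> complex" and Dec :: "nat \<Rightarrow> (nat \<Rightarrow> complex) set"
  assumes s: "0 < s" and P: "0 \<le> P" and R: "0 < R" and n: "1 \<le> n" and M: "M = num_msgs n R"
    and power: "(\<Sum>w\<in>{1..M}. (1 / real n) * (\<Sum>i<n. (cmod (x w i))\<^sup>2)) / real M \<le> P"
    and c: "cmod c < deep_fade_radius P s R"
    and Dec: "\<And>w. w \<in> {1..M} \<Longrightarrow> Dec w \<in> sets (PiM {..<n} (\<lambda>_. cgauss s))"
    and disjoint: "disjoint_family_on Dec {1..M}"
  shows "(\<Sum>w\<in>{1..M}. measure (PiM {..<n} (\<lambda>_. cgauss s))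
      {y \<in> space (PiM {..<n} (\<lambda>_. cgauss s)). (\<lambda>i\<in>{..<n}. c * x w i + y i) \<in> Dec w})
    \<le> real M * (1 + 2 powr (- R / 4)) / 2"
proof -
  let ?N = "PiM {..<n} (\<lambda>_. cgauss s)" and ?W = "{1..M}"
  interpret N: prob_space ?N
    using s by (intro prob_space_PiM prob_space_cgauss)
  define \<theta> where "\<theta> = 2 powr (- R / 4)"
  define e where "e w = (\<Sum>i<n. (cmod (x w i))\<^sup>2)" for w
  define p where "p w = measure ?N {y \<in> space ?N. (\<lambda>i\<in>{..<n}. c * x w i + y i) \<in> Dec w}" for w
  define q where "q w = measure ?N (Dec w)" for w
  define T where "T = 2 * real n * (P + 1) / (1 - \<theta>)"
  define bad where "bad = {w \<in> ?W. T < e w}"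
  define E where "E = 2 powr (real n * R / 4)"
  have \<theta>: "0 < \<theta>" "\<theta> < 1"
    using R by (auto simp: \<theta>_def powr_less_one)
  have M_pos: "0 < real M"
    using num_msgs_ge_1[of n R] M by simp
  have T: "0 < T"
    using \<theta> n P by (simp add: T_def)
  have e: "0 \<le> e w" for w
    by (simp add: e_def sum_nonneg)
  have "(\<Sum>w\<in>?W. e w) = real n * (\<Sum>w\<in>?W. (1 / real n) * e w)"
    using n by (simp add: sum_divide_distrib[symmetric])
  also have "\<dots> \<le> real n * (real M * P)"
    using power M_pos by (intro mult_left_mono) (auto simp: e_def field_simps)
  finally have "(\<Sum>w\<in>?W. e w) \<le> real n * real M * P"
    by simp
  then have "real (card bad) \<le> real n * real M * P / T"
    unfolding bad_def using card_greater_le_sum_div[of ?W e T] e T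
    by (meson divide_right_mono finite_atLeastAtMost less_imp_le order_trans)
  also have "\<dots> = real M * (1 - \<theta>) / 2 * (P / (P + 1))"
  proof -
    have "0 < real n" "0 < P + 1" "0 < 1 - \<theta>"
      using n P \<theta> by auto
    then show ?thesis
      unfolding T_def by (simp add: divide_simps)
  qed
  also have "\<dots> \<le> real M * (1 - \<theta>) / 2"
    using \<theta> M_pos P by (intro mult_left_le) auto
  finally have card_bad: "real (card bad) \<le> real M * (1 - \<theta>) / 2" .
  have "(p w)\<^sup>2 \<le> q w * E\<^sup>2" if "w \<in> ?W - bad" for w
  proof -
    have "(cmod c)\<^sup>2 \<le> (deep_fade_radius P s R)\<^sup>2"
      using c by (intro power_mono) auto
    then have "(cmod c)\<^sup>2 * e w \<le> (deep_fade_radius P s R)\<^sup>2 * T"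
      using that e by (intro mult_mono) (auto simp: bad_def)
    also have "\<dots> = real n * R * ln 2 * s / 4"
    proof -
      have "0 < P + 1" "0 < 1 - 2 powr (- R / 4)"
        using P \<theta> by (auto simp: \<theta>_def)
      then show ?thesis
        using s P R by (simp add: deep_fade_radius_square T_def \<theta>_def divide_simps)
    qed
    finally have "2 * (\<Sum>i<n. (cmod (c * x w i))\<^sup>2) / s \<le> real n * R * ln 2 / 2"
      using s by (simp add: e_def norm_mult power_mult_distrib sum_distrib_left[symmetric] field_simps)
    then have energy: "exp (2 * (\<Sum>i<n. (cmod (c * x w i))\<^sup>2) / s) \<le> E\<^sup>2"
      by (simp add: E_def powr_def power2_eq_square exp_add[symmetric] mult_ac)
    have "(p w)\<^sup>2 \<le> q w * exp (2 * (\<Sum>i<n. (cmod (c * x w i))\<^sup>2) / s)"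
      unfolding p_def q_def using that
      by (intro measure_PiM_cgauss_translate_sq_le[OF s] Dec) auto
    also have "\<dots> \<le> q w * E\<^sup>2"
      using energy by (intro mult_left_mono) (auto simp: q_def)
    finally show ?thesis .
  qed
  moreover have "(\<Sum>w\<in>?W - bad. q w) \<le> 1"
  proof -
    have "(\<Sum>w\<in>?W - bad. q w) \<le> (\<Sum>w\<in>?W. q w)"
      by (intro sum_mono2) (auto simp: q_def)
    also have "\<dots> = measure ?N (\<Union>w\<in>?W. Dec w)"
      unfolding q_def using Dec disjoint by (intro N.finite_measure_finite_Union[symmetric]) auto
    finally show ?thesis
      using N.prob_le_1[of "\<Union>w\<in>?W. Dec w"] by linarith
  qed
  moreover have "real (card (?W - bad)) \<le> real M"
    using card_mono[of ?W "?W - bad"] by simp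
  ultimately have "(\<Sum>w\<in>?W - bad. p w) \<le> E * sqrt M"
    using M_pos by (intro sum_le_of_square_le) (auto simp: E_def)
  also have "\<dots> \<le> \<theta> * sqrt M * sqrt M"
    using two_powr_rate_le_sqrt_num_msgs[of R n] R n M by (intro mult_right_mono) (auto simp: E_def \<theta>_def)
  also have "\<dots> = \<theta> * real M"
    by (simp add: mult.assoc)
  finally have good: "(\<Sum>w\<in>?W - bad. p w) \<le> \<theta> * real M" .
  have "(\<Sum>w\<in>bad. p w) \<le> real (card bad)"
    using sum_mono[of bad p "\<lambda>_. 1"] by (simp add: p_def)
  moreover have "(\<Sum>w\<in>?W. p w) = (\<Sum>w\<in>?W - bad. p w) + (\<Sum>w\<in>bad. p w)"
    by (rule sum.subset_diff) (auto simp: bad_def)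
  ultimately have "(\<Sum>w\<in>?W. p w) \<le> \<theta> * real M + real M * (1 - \<theta>) / 2"
    using good card_bad by linarith
  then show ?thesis
    by (simp add: p_def \<theta>_def field_simps)
qed

section \<open>Cooperation-free networks\<close>

definition error_floor :: "real \<Rightarrow> real \<Rightarrow> real \<Rightarrow> real" where
  "error_floor P N0 R =
    (1 - 2 powr (- R / 4)) / 2 * measure (cgauss 1) (ball 0 (deep_fade_radius P N0 R))"

lemma error_floor_pos: "0 < N0 \<Longrightarrow> 0 \<le> P \<Longrightarrow> 0 < R \<Longrightarrow> 0 < error_floor P N0 R"
  unfolding error_floor_def by (simp add: powr_less_one measure_cgauss_ball_pos deep_fade_radius_pos)

lemma (in prob_space) nn_integral_two_valued:
  assumes "B \<in> events" and "0 \<le> a" and "0 \<le> b"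
  shows "(\<integral>\<^sup>+x. ennreal a * indicator B x + ennreal b * indicator (space M - B) x \<partial>M)
    = ennreal (a * prob B + b * (1 - prob B))"
  using assms
  by (simp add: nn_integral_add nn_integral_cmult_indicator emeasure_eq_measure prob_compl
      ennreal_mult[symmetric] ennreal_plus[symmetric] del: ennreal_plus)

locale cf_receiver =
  fixes N0 :: real and K k n :: nat and dk :: "(nat \<Rightarrow> complex) \<times> (nat \<Rightarrow> complex) \<Rightarrow> nat"
  assumes N0_pos: "0 < N0" and receiver: "1 \<le> k" "k \<le> K"
    and dk_measurable: "dk \<in> measurable
      (PiM {..<n} (\<lambda>_. borel) \<Otimes>\<^sub>M PiM ({0..K} - {k}) (\<lambda>_. borel)) (count_space UNIV)"
begin

abbreviation gains where "gains \<equiv> PiM (gain_idx K) (\<lambda>_. cgauss 1)"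
abbreviation noises where "noises \<equiv> PiM (noise_idx K n) (\<lambda>_. cgauss N0)"
abbreviation link_noise where "link_noise \<equiv> PiM {..<n} (\<lambda>_. cgauss N0)"

definition decoded ::
    "(nat \<Rightarrow> nat \<Rightarrow> complex) \<Rightarrow> nat \<Rightarrow> ((nat \<times> nat \<Rightarrow> complex) \<times> (nat \<times> nat \<Rightarrow> complex)) set"
  where "decoded x w =
    {\<omega> \<in> space (chan_space N0 K n). dk (observation x w k n \<omega>, incoming K k \<omega>) = w}"

definition decision_region :: "(nat \<times> nat \<Rightarrow> complex) \<Rightarrow> nat \<Rightarrow> (nat \<Rightarrow> complex) set"
  where "decision_region \<gamma> w =
    {y \<in> space link_noise. dk (y, restrict (\<lambda>j. \<gamma> (j, k)) ({0..K} - {k})) = w}"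

lemma prob_space_gains: "prob_space gains"
  by (intro prob_space_PiM prob_space_cgauss) simp

lemma prob_space_noises: "prob_space noises"
  using N0_pos by (intro prob_space_PiM prob_space_cgauss)

lemma prob_space_link_noise: "prob_space link_noise"
  using N0_pos by (intro prob_space_PiM prob_space_cgauss)

lemma chan_space_eq: "chan_space N0 K n = gains \<Otimes>\<^sub>M noises"
  unfolding chan_space_def ..

lemma measurable_gain:
  assumes "j \<in> gain_idx K"
  shows "(\<lambda>\<omega>. fst \<omega> j) \<in> borel_measurable (chan_space N0 K n)"
proof -
  have "(\<lambda>\<gamma>. \<gamma> j) \<in> measurable gains (cgauss 1)"
    using assms by (rule measurable_component_singleton)
  then show ?thesis
    unfolding chan_space_eq measurable_cong_sets[OF refl sets_cgauss]
    by (rule measurable_compose[OF measurable_fst])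
qed

lemma measurable_noise:
  assumes "j \<in> noise_idx K n"
  shows "(\<lambda>\<omega>. snd \<omega> j) \<in> borel_measurable (chan_space N0 K n)"
proof -
  have "(\<lambda>z. z j) \<in> measurable noises (cgauss N0)"
    using assms by (rule measurable_component_singleton)
  then show ?thesis
    unfolding chan_space_eq measurable_cong_sets[OF refl sets_cgauss]
    by (rule measurable_compose[OF measurable_snd])
qed

lemma sets_decoded: "decoded x w \<in> sets (chan_space N0 K n)"
proof -
  have "observation x w k n \<in> measurable (chan_space N0 K n) (PiM {..<n} (\<lambda>_. borel))"
    unfolding observation_def
  proof (rule measurable_restrict)
    fix i assume "i \<in> {..<n}"
    then have "(0, k) \<in> gain_idx K" "(k, i) \<in> noise_idx K n"
      using receiver by (auto simp: gain_idx_def noise_idx_def)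
    then show "(\<lambda>\<omega>. fst \<omega> (0, k) * x w i + snd \<omega> (k, i)) \<in> borel_measurable (chan_space N0 K n)"
      using measurable_gain measurable_noise by measurable
  qed
  moreover have "incoming K k \<in> measurable (chan_space N0 K n) (PiM ({0..K} - {k}) (\<lambda>_. borel))"
    unfolding incoming_def
    using receiver by (intro measurable_restrict measurable_gain) (auto simp: gain_idx_def)
  ultimately have "(\<lambda>\<omega>. dk (observation x w k n \<omega>, incoming K k \<omega>))
      \<in> measurable (chan_space N0 K n) (count_space UNIV)"
    by (intro measurable_compose[OF measurable_Pair dk_measurable])
  from measurable_sets[OF this, of "{w}"] show ?thesis
    by (simp add: decoded_def vimage_def Int_def conj_commute)
qed

lemma sets_decision_region: "decision_region \<gamma> w \<in> sets link_noise"
proof -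
  have "(\<lambda>y. (y, restrict (\<lambda>j. \<gamma> (j, k)) ({0..K} - {k})))
      \<in> measurable link_noise (PiM {..<n} (\<lambda>_. borel) \<Otimes>\<^sub>M PiM ({0..K} - {k}) (\<lambda>_. borel))"
    by (intro measurable_Pair measurable_const measurable_ident_sets sets_PiM_cong) (auto simp: space_PiM)
  from measurable_sets[OF measurable_compose[OF this dk_measurable], of "{w}"] show ?thesis
    by (simp add: decision_region_def vimage_def Int_def conj_commute)
qed

lemma emeasure_decoded_section:
  assumes \<gamma>: "\<gamma> \<in> space gains"
  shows "emeasure noises (Pair \<gamma> -` decoded x w) = measure link_noise
    {y \<in> space link_noise. (\<lambda>i\<in>{..<n}. \<gamma> (0, k) * x w i + y i) \<in> decision_region \<gamma> w}"
proof -
  define proj where "proj z = (\<lambda>i\<in>{..<n}. z (k, i))" for z :: "nat \<times> nat \<Rightarrow> complex"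
  define E where "E = {y \<in> space link_noise. (\<lambda>i\<in>{..<n}. \<gamma> (0, k) * x w i + y i) \<in> decision_region \<gamma> w}"
  have noise_k: "(k, i) \<in> noise_idx K n" if "i \<in> {..<n}" for i
    using that receiver by (auto simp: noise_idx_def)
  have proj: "proj \<in> measurable noises link_noise"
    unfolding proj_def using noise_k by (intro measurable_restrict measurable_component_singleton) auto
  have "distr noises link_noise proj = link_noise"
    unfolding proj_def using N0_pos noise_k
    by (intro distr_PiM_reindex prob_space_cgauss) (auto simp: inj_on_def)
  moreover have "E \<in> sets link_noise"
  proof -
    have "(\<lambda>y. \<lambda>i\<in>{..<n}. \<gamma> (0, k) * x w i + y i) \<in> measurable link_noise link_noise"
      by measurable
    from measurable_sets[OF this sets_decision_region] show ?thesis
      by (simp add: E_def vimage_def Int_def conj_commute)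
  qed
  moreover have "Pair \<gamma> -` decoded x w = proj -` E \<inter> space noises"
    using \<gamma> unfolding decoded_def E_def decision_region_def proj_def observation_def incoming_def chan_space_eq
    by (auto simp: space_pair_measure space_PiM PiE_iff intro: extensional_arb cong: restrict_cong)
  ultimately show ?thesis
    using finite_measure.emeasure_eq_measure[OF prob_space.finite_measure[OF prob_space_link_noise]]
      emeasure_distr[OF proj]
    by (simp add: E_def)
qed

lemma sum_emeasure_decoded_section_le:
  assumes \<gamma>: "\<gamma> \<in> space gains" and P: "0 \<le> P" and R: "0 < R" and n: "1 \<le> n"
    and M: "M = num_msgs n R"
    and power: "(\<Sum>w\<in>{1..M}. (1 / real n) * (\<Sum>i<n. (cmod (x w i))\<^sup>2)) / real M \<le> P"
  shows "(\<Sum>w\<in>{1..M}. emeasure noises (Pair \<gamma> -` decoded x w))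
    \<le> ennreal (real M * (1 + 2 powr (- R / 4)) / 2)
        * indicator (ball 0 (deep_fade_radius P N0 R)) (\<gamma> (0, k))
      + ennreal (real M) * indicator (UNIV - ball 0 (deep_fade_radius P N0 R)) (\<gamma> (0, k))"
proof -
  interpret N: prob_space link_noise
    by (rule prob_space_link_noise)
  let ?p = "\<lambda>w. measure link_noise
    {y \<in> space link_noise. (\<lambda>i\<in>{..<n}. \<gamma> (0, k) * x w i + y i) \<in> decision_region \<gamma> w}"
  have "(\<Sum>w\<in>{1..M}. emeasure noises (Pair \<gamma> -` decoded x w)) = ennreal (\<Sum>w\<in>{1..M}. ?p w)"
    using \<gamma> by (simp add: emeasure_decoded_section sum_ennreal)
  also have "\<dots> \<le> ennreal (real M * (1 + 2 powr (- R / 4)) / 2)"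
    if "\<gamma> (0, k) \<in> ball 0 (deep_fade_radius P N0 R)"
    using that N0_pos P R n M power sets_decision_region
    by (intro ennreal_leI sum_decoding_prob_deep_fade_le)
      (auto simp: disjoint_family_on_def decision_region_def)
  moreover have "ennreal (\<Sum>w\<in>{1..M}. ?p w) \<le> ennreal (real M)"
    using sum_mono[of "{1..M}" ?p "\<lambda>_. 1"] N.prob_le_1 by (intro ennreal_leI) simp
  ultimately show ?thesis
    by (auto split: split_indicator)
qed

lemma sum_measure_decoded_le:
  assumes P: "0 \<le> P" and R: "0 < R" and n: "1 \<le> n" and M: "M = num_msgs n R"
    and power: "(\<Sum>w\<in>{1..M}. (1 / real n) * (\<Sum>i<n. (cmod (x w i))\<^sup>2)) / real M \<le> P"
  shows "(\<Sum>w\<in>{1..M}. measure (chan_space N0 K n) (decoded x w)) \<le> real M * (1 - error_floor P N0 R)"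
proof -
  interpret G: prob_space gains
    by (rule prob_space_gains)
  interpret Z: prob_space noises
    by (rule prob_space_noises)
  interpret GZ: pair_prob_space gains noises ..
  interpret C: prob_space "cgauss 1"
    by (rule prob_space_cgauss) simp
  define B where "B = ball (0::complex) (deep_fade_radius P N0 R)"
  define a where "a = real M * (1 + 2 powr (- R / 4)) / 2"
  have B_borel [measurable]: "B \<in> sets borel"
    by (simp add: B_def)
  let ?bound = "\<lambda>c. ennreal a * indicator B c + ennreal (real M) * indicator (UNIV - B) c"
  have gain_k: "(0, k) \<in> gain_idx K"
    using receiver by (auto simp: gain_idx_def)
  have "ennreal (\<Sum>w\<in>{1..M}. measure (chan_space N0 K n) (decoded x w))
      = (\<Sum>w\<in>{1..M}. emeasure (gains \<Otimes>\<^sub>M noises) (decoded x w))"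
    using GZ.emeasure_eq_measure by (simp add: sum_ennreal chan_space_eq)
  also have "\<dots> = (\<integral>\<^sup>+\<gamma>. (\<Sum>w\<in>{1..M}. emeasure noises (Pair \<gamma> -` decoded x w)) \<partial>gains)"
    using sets_decoded unfolding chan_space_eq
    by (simp add: Z.emeasure_pair_measure_alt nn_integral_sum GZ.measurable_emeasure_Pair1)
  also have "\<dots> \<le> (\<integral>\<^sup>+\<gamma>. ?bound (\<gamma> (0, k)) \<partial>gains)"
    unfolding a_def B_def
    by (intro nn_integral_mono sum_emeasure_decoded_section_le[OF _ P R n M power])
  also have "\<dots> = (\<integral>\<^sup>+c. ?bound c \<partial>distr gains (cgauss 1) (\<lambda>\<gamma>. \<gamma> (0, k)))"
    by (subst nn_integral_distr[OF measurable_component_singleton[OF gain_k]]) measurable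
  also have "distr gains (cgauss 1) (\<lambda>\<gamma>. \<gamma> (0, k)) = cgauss 1"
    using gain_k by (intro distr_PiM_component prob_space_cgauss) auto
  also have "(\<integral>\<^sup>+c. ?bound c \<partial>cgauss 1) = ennreal (a * C.prob B + real M * (1 - C.prob B))"
    using R by (intro C.nn_integral_two_valued[simplified]) (auto simp: B_def a_def powr_nonneg_iff)
  also have "a * C.prob B + real M * (1 - C.prob B) = real M * (1 - error_floor P N0 R)"
    by (simp add: a_def B_def error_floor_def field_simps)
  finally show ?thesis
  proof (subst (asm) ennreal_le_iff)
    have "error_floor P N0 R \<le> 1"
      unfolding error_floor_def using C.prob_le_1 by (intro mult_le_one) (auto intro: order_trans[OF _ powr_ge_zero])
    then show "0 \<le> real M * (1 - error_floor P N0 R)"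
      by simp
  qed
qed

end

lemma fail_prob_ge_error_floor:
  assumes N0: "0 < N0" and P: "0 \<le> P" and R: "0 < R" and k: "k \<in> D" and D: "D \<subseteq> {1..K}"
    and M: "M = num_msgs n R" and admissible: "cf_admissible P D K n M x dec"
  shows "error_floor P N0 R \<le> fail_prob N0 K n M x dec D"
proof -
  let ?\<Omega> = "chan_space N0 K n"
  have receivers: "cf_receiver N0 K k' n (dec k')" if "k' \<in> D" for k'
    using that N0 D admissible by unfold_locales (auto simp: cf_admissible_def)
  interpret cf_receiver N0 K k n "dec k"
    using k by (rule receivers)
  interpret \<Omega>: prob_space ?\<Omega>
    unfolding chan_space_eq using prob_space_gains prob_space_noises by (rule prob_space_pair)
  define F where "F w =
    {\<omega> \<in> space ?\<Omega>. \<exists>k'\<in>D. dec k' (observation x w k' n \<omega>, incoming K k' \<omega>) \<noteq> w}" for w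
  have n: "1 \<le> n" and power: "(\<Sum>w\<in>{1..M}. (1 / real n) * (\<Sum>i<n. (cmod (x w i))\<^sup>2)) / real M \<le> P"
    using admissible by (auto simp: cf_admissible_def)
  have F_sets: "F w \<in> sets ?\<Omega>" for w
  proof -
    have "F w = space ?\<Omega> \<inter> (\<Union>k'\<in>D. space ?\<Omega> - cf_receiver.decoded N0 K k' n (dec k') x w)"
      using D receivers by (auto simp: F_def cf_receiver.decoded_def)
    also have "\<dots> \<in> sets ?\<Omega>"
      using finite_subset[OF D] receivers
      by (intro sets.Int sets.top sets.finite_UN sets.compl_sets cf_receiver.sets_decoded) auto
    finally show ?thesis .
  qed
  have "1 - measure ?\<Omega> (decoded x w) \<le> measure ?\<Omega> (F w)" for w
    using \<Omega>.finite_measure_mono[of "space ?\<Omega> - decoded x w" "F w"] \<Omega>.prob_compl[OF sets_decoded]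
      F_sets k
    by (auto simp: F_def decoded_def)
  then have "real M - (\<Sum>w\<in>{1..M}. measure ?\<Omega> (decoded x w)) \<le> (\<Sum>w\<in>{1..M}. measure ?\<Omega> (F w))"
    using sum_mono[of "{1..M}" "\<lambda>w. 1 - measure ?\<Omega> (decoded x w)"] by (simp add: sum_subtractf)
  then have "real M * error_floor P N0 R \<le> (\<Sum>w\<in>{1..M}. measure ?\<Omega> (F w))"
    using sum_measure_decoded_le[OF P R n M power] by (simp add: algebra_simps)
  moreover have "0 < real M"
    using num_msgs_ge_1[of n R] M by simp
  ultimately show ?thesis
    by (simp add: fail_prob_def F_def field_simps)
qed

lemma cf_achievable_0:
  assumes "0 \<le> P"
  shows "cf_achievable P N0 D 0"
proof -
  have "num_msgs 1 0 = 1"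
    by (simp add: num_msgs_def)
  then have "cf_admissible P (D K) K 1 (num_msgs 1 0) (\<lambda>w i. 0) (\<lambda>k _. 1)
      \<and> fail_prob N0 K 1 (num_msgs 1 0) (\<lambda>w i. 0) (\<lambda>k _. 1) (D K) = 0" for K
    using assms by (simp add: cf_admissible_def fail_prob_def)
  then show ?thesis
    unfolding cf_achievable_def
    by (intro conjI order_refl exI[of _ "\<lambda>_. 1"] exI[of _ "\<lambda>_ w i. 0"] exI[of _ "\<lambda>_ k _. 1"])
      auto
qed

lemma not_cf_achievable:
  assumes N0: "0 < N0" and P: "0 \<le> P" and R: "0 < R"
    and D: "\<And>K. 1 \<le> K \<Longrightarrow> D K \<noteq> {} \<and> D K \<subseteq> {1..K}"
  shows "\<not> cf_achievable P N0 D R"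
proof
  assume "cf_achievable P N0 D R"
  then obtain n x dec
    where admissible: "\<forall>K\<ge>1. cf_admissible P (D K) K (n K) (num_msgs (n K) R) (x K) (dec K)"
      and lim: "(\<lambda>K. fail_prob N0 K (n K) (num_msgs (n K) R) (x K) (dec K) (D K)) \<longlonglongrightarrow> 0"
    unfolding cf_achievable_def by blast
  have "error_floor P N0 R \<le> fail_prob N0 K (n K) (num_msgs (n K) R) (x K) (dec K) (D K)"
    if K: "1 \<le> K" for K
  proof -
    obtain k where "k \<in> D K"
      using D[OF K] by blast
    then show ?thesis
      using D[OF K] admissible K by (intro fail_prob_ge_error_floor[OF N0 P R]) auto
  qed
  then have "error_floor P N0 R \<le> 0"
    using lim by (intro LIMSEQ_le_const) auto
  with error_floor_pos[OF N0 P R] show False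
    by simp
qed

lemma cf_capacity_eq_0:
  assumes "0 < N0" and "0 \<le> P" and "\<And>K. 1 \<le> K \<Longrightarrow> D K \<noteq> {} \<and> D K \<subseteq> {1..K}"
  shows "cf_capacity P N0 D = 0"
proof -
  have "R = 0" if "cf_achievable P N0 D R" for R
  proof -
    have "0 \<le> R"
      using that by (simp add: cf_achievable_def)
    moreover have "\<not> 0 < R"
      using that not_cf_achievable[OF assms(1,2) _ assms(3)] by blast
    ultimately show "R = 0"
      by simp
  qed
  then have "{R. cf_achievable P N0 D R} = {0}"
    using cf_achievable_0[OF assms(2)] by blast
  then show ?thesis
    by (simp add: cf_capacity_def zero_ereal_def)
qed

theorem theorem2:
  fixes P N0 :: real and d :: "nat \<Rightarrow> nat"
  assumes "0 \<le> P" and "0 < N0"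
    and "\<forall>K\<ge>1. 1 \<le> d K \<and> d K \<le> K"
  shows "cf_capacity P N0 (\<lambda>K. {d K}) = 0 \<and> cf_capacity P N0 (\<lambda>K. {1..K}) = 0"
  using assms by (auto intro!: cf_capacity_eq_0)

end
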